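(* Let $\mathbf{X}\in\mathbb{R}^{m\times n}$ be nonzero, fix $p$ with $0<p<1$, and let $\mathbf{X}=\mathbf{L}\boldsymbol{\Sigma}\mathbf{R}^\top$ be a singular value decomposition of $\mathbf{X}$ with singular values $\sigma_1(\mathbf{X})\ge\sigma_2(\mathbf{X})\ge\dots\ge\sigma_{\min(m,n)}(\mathbf{X})\ge0$. Let $\bar d$ be the largest integer such that $$\sigma_{\bar d}(\mathbf{X})>\frac{1-p}{p+(1-p)\bar d}\sum_{i=1}^{\bar d}\sigma_i(\mathbf{X}),$$ and set $\mu=\frac{1-p}{p+(1-p)\bar d}\sum_{i=1}^{\bar d}\sigma_i(\mathbf{X})$. Then the (unique) optimal solution of $$\min_{\mathbf{A}\in\mathbb{R}^{m\times n}}\ \|\mathbf{X}-\mathbf{A}\|_F^2+\frac{1-p}{p}\|\mathbf{A}\|_\star^2$$ is $\mathbf{A}^{\rm opt}=\mathbf{L}\,\mathcal{S}_\mu(\boldsymbol{\Sigma})\,\mathbf{R}^\top$, where $\mathcal{S}_\mu(\sigma)=\max(\sigma-\mu,0)$ is applied entrywise to the singular values on the diagonal of $\boldsymbol{\Sigma}$.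
   Context: $\|\cdot\|_F$ is the Frobenius norm and $\|\cdot\|_\star$ the nuclear norm (sum of singular values). *)

theory Defs
  imports "Jordan_Normal_Form.Char_Poly" "HOL-Computational_Algebra.Polynomial"
begin

definition frob_norm :: "real mat \<Rightarrow> real" where
  "frob_norm A = sqrt (\<Sum>i<dim_row A. \<Sum>j<dim_col A. (A $$ (i,j))^2)"

text \<open>Singular values of A are the square roots of the eigenvalues of A^T A
  (with multiplicity); the nuclear norm is their sum.\<close>
definition nuc_norm :: "real mat \<Rightarrow> real" where
  "nuc_norm A = (\<Sum>x\<in>#proots (char_poly (transpose_mat A * A)). sqrt x)"

definition orth_mat :: "nat \<Rightarrow> real mat \<Rightarrow> bool" where
  "orth_mat k U \<longleftrightarrow> U \<in> carrier_mat k k \<and> transpose_mat U * U = 1\<^sub>m k"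

definition is_svd :: "nat \<Rightarrow> nat \<Rightarrow> real mat \<Rightarrow> real mat \<Rightarrow> real mat \<Rightarrow> real mat \<Rightarrow> bool" where
  "is_svd m n X L S R \<longleftrightarrow>
     X \<in> carrier_mat m n \<and> orth_mat m L \<and> orth_mat n R \<and>
     S \<in> carrier_mat m n \<and> diagonal_mat S \<and>
     (\<forall>i<min m n. 0 \<le> S $$ (i,i)) \<and>
     (\<forall>i j. i \<le> j \<longrightarrow> j < min m n \<longrightarrow> S $$ (j,j) \<le> S $$ (i,i)) \<and>
     X = L * S * transpose_mat R"

definition soft_thr_diag :: "real \<Rightarrow> real mat \<Rightarrow> real mat" where
  "soft_thr_diag \<mu> S = mat (dim_row S) (dim_col S)
     (\<lambda>(i,j). if i = j then max (S $$ (i,i) - \<mu>) 0 else 0)"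

text \<open>The i-th singular value (1-based) read off the diagonal of S.\<close>
definition sv :: "real mat \<Rightarrow> nat \<Rightarrow> real" where
  "sv S i = S $$ (i - 1, i - 1)"

definition d_bar :: "real \<Rightarrow> nat \<Rightarrow> nat \<Rightarrow> real mat \<Rightarrow> nat" where
  "d_bar p m n S = (GREATEST d::nat. 1 \<le> d \<and> d \<le> min m n \<and>
      sv S d > (1 - p) / (p + (1 - p) * real d) * (\<Sum>i=1..d. sv S i))"

definition mu_thr :: "real \<Rightarrow> nat \<Rightarrow> nat \<Rightarrow> real mat \<Rightarrow> real" where
  "mu_thr p m n S = (let d = d_bar p m n S in
      (1 - p) / (p + (1 - p) * real d) * (\<Sum>i=1..d. sv S i))"

end

theory Submission
  imports Defs "HOL-Computational_Algebra.Fundamental_Theorem_Algebra" "HOL-Analysis.L2_Norm"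
begin

(*
  Write lam = (1 - p) / p, T for the soft-thresholded S, B = L T R^T, and |.|_F, |.|_N for the
  Frobenius and nuclear norm. The residual X - B = L (S - T) R^T has a diagonal core with
  entries min (sigma_i, mu), so its operator norm is at most mu and it is aligned with B:
  <X - B, B> = mu |B|_N. By duality of operator and nuclear norm, <X - B, A> <= mu |A|_N for
  every A, and the choice of d_bar makes mu a fixed point, mu = lam |B|_N. Expanding
  |X - A|_F^2 around B then gives
    |X - A|_F^2 + lam |A|_N^2
      = |X - B|_F^2 + lam |B|_N^2 + 2 (lam |B|_N |A|_N - <X - B, A>)
        + lam (|B|_N - |A|_N)^2 + |B - A|_F^2,
  which exceeds the value at B unless A = B. Since the nuclear norm is defined through the
  characteristic polynomial of A^T A, it is evaluated via a spectral decomposition of A^T A,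
  obtained by Householder deflation.
*)

section \<open>Orthogonal matrices\<close>

lemma orth_matD:
  assumes "orth_mat n U"
  shows "U \<in> carrier_mat n n" "transpose_mat U * U = 1\<^sub>m n" "U * transpose_mat U = 1\<^sub>m n"
  using assms mat_mult_left_right_inverse[of "transpose_mat U" n U] unfolding orth_mat_def by auto

lemma orth_mat_transpose: "orth_mat n U \<Longrightarrow> orth_mat n (transpose_mat U)"
  using orth_matD[of n U] unfolding orth_mat_def by simp

lemma orth_mat_mult:
  assumes U: "orth_mat n U" and V: "orth_mat n V"
  shows "orth_mat n (U * V)"
proof -
  note U' = orth_matD[OF U] and V' = orth_matD[OF V]
  have "transpose_mat (U * V) * (U * V) = transpose_mat V * (transpose_mat U * U) * V"
    using U'(1) V'(1) by (simp add: transpose_mult[of _ n n] assoc_mult_mat[of _ n n _ n _ n])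
  thus ?thesis using U'(1,2) V'(1,2) unfolding orth_mat_def by simp
qed

lemma orth_mat_scalar_prod:
  assumes U: "orth_mat n U" and x: "x \<in> carrier_vec n" and y: "y \<in> carrier_vec n"
  shows "(U *\<^sub>v x) \<bullet> (U *\<^sub>v y) = x \<bullet> y"
proof -
  note U' = orth_matD[OF U]
  have "(U *\<^sub>v x) \<bullet> (U *\<^sub>v y) = (transpose_mat U *\<^sub>v (U *\<^sub>v x)) \<bullet> y"
    using transpose_vec_mult_scalar[OF U'(1) y, of "U *\<^sub>v x"] x U'(1) by simp
  also have "transpose_mat U *\<^sub>v (U *\<^sub>v x) = x"
    using U' x by (metis assoc_mult_mat_vec one_mult_mat_vec transpose_carrier_mat)
  finally show ?thesis .
qed

section \<open>Spectral theorem for real symmetric matrices\<close>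

lemma conjugate_of_real_mat_mult_vec:
  fixes M :: "real mat" and v :: "complex vec"
  assumes "M \<in> carrier_mat n n" and "v \<in> carrier_vec n"
  shows "conjugate (map_mat of_real M *\<^sub>v v) = map_mat of_real M *\<^sub>v conjugate v"
  using assms by (intro eq_vecI) (auto simp: scalar_prod_def cnj_sum)

lemma symmetric_real_mat_has_eigenvalue:
  fixes M :: "real mat"
  assumes M: "M \<in> carrier_mat n n" and sym: "transpose_mat M = M" and n: "0 < n"
  obtains e where "eigenvalue M e"
proof -
  let ?Mc = "map_mat complex_of_real M"
  have Mc: "?Mc \<in> carrier_mat n n" using M by simp
  have "\<not> constant (poly (char_poly ?Mc))"
    using degree_monic_char_poly[OF Mc] n by (simp add: constant_degree)
  then obtain z where root: "poly (char_poly ?Mc) z = 0"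
    using fundamental_theorem_of_algebra by blast
  then obtain v where v: "v \<in> carrier_vec n" and v0: "v \<noteq> 0\<^sub>v n" and Mv: "?Mc *\<^sub>v v = z \<cdot>\<^sub>v v"
    using eigenvalue_root_char_poly[OF Mc] Mc unfolding eigenvalue_def eigenvector_def by auto
  have "z * (v \<bullet>c v) = (?Mc *\<^sub>v v) \<bullet>c v" using v Mv by simp
  also have "\<dots> = v \<bullet>c (?Mc *\<^sub>v v)"
    using transpose_vec_mult_scalar[OF Mc _ v, of "conjugate v"] sym v
    by (simp add: conjugate_of_real_mat_mult_vec[OF M v] map_mat_transpose)
  also have "\<dots> = cnj z * (v \<bullet>c v)" using v Mv by (simp add: conjugate_smult_vec)
  finally have "z = cnj z" using v v0 by simp
  hence "z = of_real (Re z)" by (simp add: complex_eq_iff)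
  hence "of_real (poly (char_poly M) (Re z)) = poly (char_poly ?Mc) z"
    by (metis of_real_hom.char_poly_hom[OF M] of_real_hom.poly_map_poly)
  hence "poly (char_poly M) (Re z) = 0" using root by simp
  thus thesis using that eigenvalue_root_char_poly[OF M] by blast
qed

lemma symmetric_real_mat_unit_eigenvector:
  fixes M :: "real mat"
  assumes M: "M \<in> carrier_mat n n" and "transpose_mat M = M" and "0 < n"
  obtains e u where "u \<in> carrier_vec n" "u \<bullet> u = 1" "M *\<^sub>v u = e \<cdot>\<^sub>v u"
proof -
  obtain e where "eigenvalue M e" using symmetric_real_mat_has_eigenvalue[OF assms] .
  then obtain v where v: "v \<in> carrier_vec n" "v \<noteq> 0\<^sub>v n" and Mv: "M *\<^sub>v v = e \<cdot>\<^sub>v v"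
    using M unfolding eigenvalue_def eigenvector_def by auto
  have pos: "0 < v \<bullet> v" using conjugate_square_greater_0_vec[OF v(1)] v by simp
  define u where "u = (1 / sqrt (v \<bullet> v)) \<cdot>\<^sub>v v"
  have "u \<bullet> u = 1" unfolding u_def using v pos by (simp add: field_simps)
  moreover have "M *\<^sub>v u = e \<cdot>\<^sub>v u" unfolding u_def using M v Mv
    by (simp add: mult_mat_vec smult_smult_assoc mult.commute)
  moreover have "u \<in> carrier_vec n" unfolding u_def using v by simp
  ultimately show thesis using that by blast
qed

lemma col_eq_mult_unit_vec:
  fixes A :: "'a :: semiring_1 mat"
  assumes "A \<in> carrier_mat m n" and "j < n"
  shows "col A j = A *\<^sub>v unit_vec n j"
  using assms by (intro eq_vecI) (auto simp: scalar_prod_right_unit[of j n])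

definition householder_mat :: "nat \<Rightarrow> real vec \<Rightarrow> real mat" where
  "householder_mat n w = mat n n (\<lambda>(i, j). (if i = j then 1 else 0) - 2 / (w \<bullet> w) * (w $ i * w $ j))"

lemma householder_mat_mult_vec:
  assumes w: "w \<in> carrier_vec n" and x: "x \<in> carrier_vec n"
  shows "householder_mat n w *\<^sub>v x = x - (2 / (w \<bullet> w) * (w \<bullet> x)) \<cdot>\<^sub>v w"
proof (rule eq_vecI)
  fix i assume "i < dim_vec (x - (2 / (w \<bullet> w) * (w \<bullet> x)) \<cdot>\<^sub>v w)"
  hence i: "i < n" using w by simp
  define c where "c = 2 / (w \<bullet> w)"
  have "(householder_mat n w *\<^sub>v x) $ i = (\<Sum>j<n. (if i = j then x $ j else 0) - c * w $ i * (w $ j * x $ j))"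
    using i x by (auto simp: householder_mat_def scalar_prod_def lessThan_atLeast0 c_def algebra_simps
        intro!: sum.cong)
  also have "\<dots> = x $ i - c * w $ i * (w \<bullet> x)"
    using i w x by (simp add: sum_subtractf sum_distrib_left[symmetric] scalar_prod_def lessThan_atLeast0)
  finally show "(householder_mat n w *\<^sub>v x) $ i = (x - (2 / (w \<bullet> w) * (w \<bullet> x)) \<cdot>\<^sub>v w) $ i"
    using i w x by (simp add: c_def)
qed (use w in \<open>simp add: householder_mat_def\<close>)

lemma householder_mat_involution:
  assumes w: "w \<in> carrier_vec n" and w0: "w \<noteq> 0\<^sub>v n" and x: "x \<in> carrier_vec n"
  shows "householder_mat n w *\<^sub>v (householder_mat n w *\<^sub>v x) = x"
proof -
  define a where "a = 2 / (w \<bullet> w) * (w \<bullet> x)"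
  have ww: "w \<bullet> w \<noteq> 0" using conjugate_square_eq_0_vec[OF w] w0 by simp
  have "w \<bullet> (x - a \<cdot>\<^sub>v w) = - (w \<bullet> x)"
    using w x ww by (simp add: scalar_prod_minus_distrib a_def)
  hence "2 / (w \<bullet> w) * (w \<bullet> (x - a \<cdot>\<^sub>v w)) = - a" unfolding a_def by simp
  hence "householder_mat n w *\<^sub>v (x - a \<cdot>\<^sub>v w) = (x - a \<cdot>\<^sub>v w) - (- a) \<cdot>\<^sub>v w"
    using householder_mat_mult_vec[of w n "x - a \<cdot>\<^sub>v w"] w x by simp
  moreover have "householder_mat n w *\<^sub>v x = x - a \<cdot>\<^sub>v w"
    using householder_mat_mult_vec[OF w x] unfolding a_def .
  ultimately show ?thesis using w x by (intro eq_vecI) auto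
qed

lemma householder_mat_orth:
  assumes w: "w \<in> carrier_vec n" and w0: "w \<noteq> 0\<^sub>v n"
  shows "orth_mat n (householder_mat n w)"
proof -
  let ?H = "householder_mat n w"
  have H: "?H \<in> carrier_mat n n" by (simp add: householder_mat_def)
  have "transpose_mat ?H = ?H" by (auto simp: householder_mat_def mult.commute)
  moreover have "?H * ?H = 1\<^sub>m n"
  proof (rule eq_matI)
    fix i j assume ij: "i < dim_row (1\<^sub>m n)" "j < dim_col (1\<^sub>m n)"
    have "(?H * ?H) $$ (i, j) = (?H *\<^sub>v (?H *\<^sub>v unit_vec n j)) $ i"
      using H ij by (simp add: col_eq_mult_unit_vec[OF H])
    thus "(?H * ?H) $$ (i, j) = 1\<^sub>m n $$ (i, j)"
      using householder_mat_involution[OF w w0, of "unit_vec n j"] ij by simp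
  qed (use H in auto)
  ultimately show ?thesis using H unfolding orth_mat_def by simp
qed

lemma orth_mat_with_first_col:
  assumes u: "u \<in> carrier_vec n" and uu: "u \<bullet> u = 1" and n: "0 < n"
  obtains H where "orth_mat n H" "col H 0 = u"
proof (cases "u = unit_vec n 0")
  case True
  thus thesis using that[of "1\<^sub>m n"] n by (simp add: orth_mat_def)
next
  case False
  define w where "w = u - unit_vec n 0"
  have w: "w \<in> carrier_vec n" unfolding w_def using u by simp
  have w0: "w \<noteq> 0\<^sub>v n"
  proof
    assume w0: "w = 0\<^sub>v n"
    have "u $ i = unit_vec n 0 $ i" if "i < n" for i
      using arg_cong[OF w0, of "\<lambda>v. v $ i"] that u by (simp add: w_def)
    hence "u = unit_vec n 0" using u by (intro eq_vecI) auto
    thus False using False by simp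
  qed
  have "w \<bullet> unit_vec n 0 = u $ 0 - 1"
    unfolding w_def using u n by (simp add: minus_scalar_prod_distrib)
  moreover have "w \<bullet> w = 2 - 2 * u $ 0"
    unfolding w_def using u uu n by (simp add: minus_scalar_prod_distrib scalar_prod_minus_distrib)
  ultimately have "2 / (w \<bullet> w) * (w \<bullet> unit_vec n 0) = -1"
    using conjugate_square_eq_0_vec[OF w] w0 by (simp add: field_simps)
  moreover have "householder_mat n w \<in> carrier_mat n n" by (simp add: householder_mat_def)
  ultimately have "col (householder_mat n w) 0 = unit_vec n 0 - (-1) \<cdot>\<^sub>v w"
    using n by (simp add: col_eq_mult_unit_vec householder_mat_mult_vec[OF w])
  also have "\<dots> = u" unfolding w_def using u by (intro eq_vecI) auto
  finally have "col (householder_mat n w) 0 = u" .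
  thus thesis using that householder_mat_orth[OF w w0] by blast
qed

lemma symmetric_mat_first_col_split:
  fixes A :: "'a :: comm_ring_1 mat"
  assumes A: "A \<in> carrier_mat (Suc k) (Suc k)" and sym: "transpose_mat A = A"
    and col: "col A 0 = e \<cdot>\<^sub>v unit_vec (Suc k) 0"
  obtains B where "B \<in> carrier_mat k k" "transpose_mat B = B"
    "A = four_block_mat (mat 1 1 (\<lambda>_. e)) (0\<^sub>m 1 k) (0\<^sub>m k 1) B"
proof
  define B where "B = mat k k (\<lambda>(i, j). A $$ (Suc i, Suc j))"
  show "B \<in> carrier_mat k k" unfolding B_def by simp
  have A0: "A $$ (i, 0) = (if i = 0 then e else 0)" if "i < Suc k" for i
    using arg_cong[OF col, of "\<lambda>v. v $ i"] that A by auto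
  have sym': "A $$ (j, i) = A $$ (i, j)" if "i < Suc k" "j < Suc k" for i j
    using arg_cong[OF sym, of "\<lambda>M. M $$ (i, j)"] that A by auto
  show "transpose_mat B = B" unfolding B_def using sym' by (auto intro!: eq_matI)
  show "A = four_block_mat (mat 1 1 (\<lambda>_. e)) (0\<^sub>m 1 k) (0\<^sub>m k 1) B"
    using A A0 sym'[of 0] unfolding B_def
    by (intro eq_matI) (auto simp: four_block_mat_def not_less less_Suc_eq_0_disj)
qed

lemma block_diag_orth_conj:
  fixes e :: real
  assumes Q: "orth_mat k Q" and D: "D \<in> carrier_mat k k" "diagonal_mat D"
  obtains P D' where "orth_mat (Suc k) P" "D' \<in> carrier_mat (Suc k) (Suc k)" "diagonal_mat D'"
    "four_block_mat (mat 1 1 (\<lambda>_. e)) (0\<^sub>m 1 k) (0\<^sub>m k 1) (Q * D * transpose_mat Q)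
       = P * D' * transpose_mat P"
proof
  note Q' = orth_matD[OF Q]
  let ?E = "mat 1 1 (\<lambda>_. e) :: real mat"
  define P where "P = four_block_mat (1\<^sub>m 1) (0\<^sub>m 1 k) (0\<^sub>m k 1) Q"
  define D' where "D' = four_block_mat ?E (0\<^sub>m 1 k) (0\<^sub>m k 1) D"
  have PT: "transpose_mat P = four_block_mat (1\<^sub>m 1) (0\<^sub>m 1 k) (0\<^sub>m k 1) (transpose_mat Q)"
    unfolding P_def using Q'(1) by (simp add: transpose_four_block_mat[of _ 1 1 _ k _ k])
  have "transpose_mat P * P = 1\<^sub>m (Suc k)"
    unfolding PT unfolding P_def using Q' by (simp add: mult_four_block_mat[of _ 1 1 _ k _ k _ _ 1 _ k])
  moreover have "P \<in> carrier_mat (Suc k) (Suc k)"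
    unfolding P_def using four_block_carrier_mat[OF one_carrier_mat[of 1] Q'(1)] by simp
  ultimately show "orth_mat (Suc k) P" unfolding orth_mat_def by simp
  show "D' \<in> carrier_mat (Suc k) (Suc k)"
    unfolding D'_def using four_block_carrier_mat[OF _ D(1), of ?E 1 1] by simp
  show "diagonal_mat D'" unfolding D'_def using D by (auto simp: diagonal_mat_def)
  show "four_block_mat ?E (0\<^sub>m 1 k) (0\<^sub>m k 1) (Q * D * transpose_mat Q) = P * D' * transpose_mat P"
    unfolding PT unfolding P_def D'_def using Q'(1) D
    by (simp add: mult_four_block_mat[of _ 1 1 _ k _ k _ _ 1 _ k])
qed

lemma symmetric_mat_deflate:
  fixes M :: "real mat"
  assumes M: "M \<in> carrier_mat (Suc k) (Suc k)" and sym: "transpose_mat M = M"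
    and u: "u \<in> carrier_vec (Suc k)" "u \<bullet> u = 1" and Mu: "M *\<^sub>v u = e \<cdot>\<^sub>v u"
  obtains H B where "orth_mat (Suc k) H" "B \<in> carrier_mat k k" "transpose_mat B = B"
    "M = H * four_block_mat (mat 1 1 (\<lambda>_. e)) (0\<^sub>m 1 k) (0\<^sub>m k 1) B * transpose_mat H"
proof -
  let ?n = "Suc k"
  obtain H where H: "orth_mat ?n H" and Hu: "col H 0 = u"
    using orth_mat_with_first_col[OF u] by blast
  note H' = orth_matD[OF H]
  define A where "A = transpose_mat H * M * H"
  have A: "A \<in> carrier_mat ?n ?n" unfolding A_def using H'(1) M by simp
  have "transpose_mat A = transpose_mat H * transpose_mat (transpose_mat H * M)"
    unfolding A_def using H'(1) M by (intro transpose_mult) auto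
  also have "\<dots> = A"
    unfolding A_def using H'(1) M sym transpose_mult[of "transpose_mat H" ?n ?n M ?n]
    by (simp add: assoc_mult_mat[of _ ?n ?n _ ?n _ ?n])
  finally have "transpose_mat A = A" .
  moreover have "col A 0 = e \<cdot>\<^sub>v unit_vec ?n 0"
  proof -
    have "col A 0 = transpose_mat H *\<^sub>v (M *\<^sub>v col H 0)"
      unfolding A_def using H'(1) M by (simp add: col_mult2[of _ ?n ?n _ ?n] del: col_mult)
    also have "\<dots> = e \<cdot>\<^sub>v col (transpose_mat H * H) 0"
      using H'(1) M Hu Mu u by (simp add: mult_mat_vec col_mult2[of _ ?n ?n _ ?n] del: col_mult)
    finally show ?thesis using H'(2) by simp
  qed
  ultimately obtain B where B: "B \<in> carrier_mat k k" "transpose_mat B = B"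
    and AB: "A = four_block_mat (mat 1 1 (\<lambda>_. e)) (0\<^sub>m 1 k) (0\<^sub>m k 1) B"
    using symmetric_mat_first_col_split[OF A] by blast
  have "M = (H * transpose_mat H) * M * (H * transpose_mat H)" using H'(3) M by simp
  also have "\<dots> = H * A * transpose_mat H"
    unfolding A_def using H'(1) M by (simp add: assoc_mult_mat[of _ ?n ?n _ ?n _ ?n])
  finally show thesis using that H B unfolding AB by blast
qed

lemma real_symmetric_mat_spectral:
  fixes M :: "real mat"
  assumes "M \<in> carrier_mat n n" and "transpose_mat M = M"
  obtains Q D where "orth_mat n Q" "D \<in> carrier_mat n n" "diagonal_mat D" "M = Q * D * transpose_mat Q"
proof -
  have "\<exists>Q D. orth_mat n Q \<and> D \<in> carrier_mat n n \<and> diagonal_mat D \<and> M = Q * D * transpose_mat Q"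
    using assms
  proof (induction n arbitrary: M)
    case 0
    thus ?case by (intro exI[of _ "1\<^sub>m 0"] exI[of _ M]) (auto simp: orth_mat_def diagonal_mat_def)
  next
    case (Suc k M)
    let ?n = "Suc k"
    have M: "M \<in> carrier_mat ?n ?n" using Suc.prems by simp
    obtain e u where u: "u \<in> carrier_vec ?n" "u \<bullet> u = 1" and Mu: "M *\<^sub>v u = e \<cdot>\<^sub>v u"
      using symmetric_real_mat_unit_eigenvector[OF M Suc.prems(2)] by blast
    obtain H B where H: "orth_mat ?n H" and B: "B \<in> carrier_mat k k" "transpose_mat B = B"
      and MHB: "M = H * four_block_mat (mat 1 1 (\<lambda>_. e)) (0\<^sub>m 1 k) (0\<^sub>m k 1) B * transpose_mat H"
      using symmetric_mat_deflate[OF M Suc.prems(2) u Mu] by blast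
    obtain Q D where Q: "orth_mat k Q" and D: "D \<in> carrier_mat k k" "diagonal_mat D"
      and BQD: "B = Q * D * transpose_mat Q" using Suc.IH[OF B] by blast
    obtain P D' where P: "orth_mat ?n P" and D': "D' \<in> carrier_mat ?n ?n" "diagonal_mat D'"
      and BP: "four_block_mat (mat 1 1 (\<lambda>_. e)) (0\<^sub>m 1 k) (0\<^sub>m k 1) B = P * D' * transpose_mat P"
      using block_diag_orth_conj[OF Q D, of e] unfolding BQD by metis
    have "M = (H * P) * D' * transpose_mat (H * P)"
      unfolding MHB BP using orth_matD[OF H] orth_matD[OF P] D'(1)
      by (simp add: transpose_mult[of _ ?n ?n] assoc_mult_mat[of _ ?n ?n _ ?n _ ?n])
    thus ?case using orth_mat_mult[OF H P] D' by blast
  qed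
  thus thesis using that by blast
qed

section \<open>Frobenius inner product\<close>

definition frob_inner :: "real mat \<Rightarrow> real mat \<Rightarrow> real" where
  "frob_inner U V = (\<Sum>i<dim_row U. \<Sum>j<dim_col U. U $$ (i, j) * V $$ (i, j))"

lemma frob_norm_square: "(frob_norm U)\<^sup>2 = frob_inner U U"
proof -
  have "0 \<le> (\<Sum>i<dim_row U. \<Sum>j<dim_col U. (U $$ (i, j))\<^sup>2)" by (intro sum_nonneg) auto
  thus ?thesis unfolding frob_norm_def frob_inner_def by (simp add: power2_eq_square)
qed

lemma frob_inner_eq_sum_col:
  assumes "U \<in> carrier_mat m n" and "V \<in> carrier_mat m n"
  shows "frob_inner U V = (\<Sum>j<n. col U j \<bullet> col V j)"
  unfolding frob_inner_def using assms
  by (subst sum.swap) (simp add: scalar_prod_def lessThan_atLeast0)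

lemma frob_inner_transpose:
  assumes "U \<in> carrier_mat m n" and "V \<in> carrier_mat m n"
  shows "frob_inner (transpose_mat U) (transpose_mat V) = frob_inner U V"
  unfolding frob_inner_def using assms by (subst sum.swap) simp

lemma frob_inner_orth_left:
  assumes L: "orth_mat m L" and U: "U \<in> carrier_mat m n" and V: "V \<in> carrier_mat m n"
  shows "frob_inner (L * U) (L * V) = frob_inner U V"
proof -
  have L': "L \<in> carrier_mat m m" using orth_matD[OF L] by simp
  have "frob_inner (L * U) (L * V) = (\<Sum>j<n. (L *\<^sub>v col U j) \<bullet> (L *\<^sub>v col V j))"
    using L' U V by (simp add: frob_inner_eq_sum_col[of _ m n] col_mult2[of _ m m _ n] del: col_mult)
  also have "\<dots> = (\<Sum>j<n. col U j \<bullet> col V j)"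
    using U V by (intro sum.cong refl orth_mat_scalar_prod[OF L]) auto
  finally show ?thesis using frob_inner_eq_sum_col[OF U V] by simp
qed

lemma frob_inner_orth_right:
  assumes R: "orth_mat n R" and U: "U \<in> carrier_mat m n" and V: "V \<in> carrier_mat m n"
  shows "frob_inner (U * R) (V * R) = frob_inner U V"
proof -
  have R': "R \<in> carrier_mat n n" using orth_matD[OF R] by simp
  have "frob_inner (U * R) (V * R)
      = frob_inner (transpose_mat R * transpose_mat U) (transpose_mat R * transpose_mat V)"
    using frob_inner_transpose[of "U * R" m n "V * R"] U V R' by (simp add: transpose_mult)
  also have "\<dots> = frob_inner (transpose_mat U) (transpose_mat V)"
    using U V by (intro frob_inner_orth_left[OF orth_mat_transpose[OF R]]) auto
  finally show ?thesis using frob_inner_transpose[OF U V] by simp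
qed

lemma frob_inner_orth_conj:
  assumes L: "orth_mat m L" and R: "orth_mat n R" and U: "U \<in> carrier_mat m n" and V: "V \<in> carrier_mat m n"
  shows "frob_inner (L * U * transpose_mat R) (L * V * transpose_mat R) = frob_inner U V"
proof -
  have "L \<in> carrier_mat m m" "transpose_mat R \<in> carrier_mat n n"
    using orth_matD[OF L] orth_matD[OF R] by auto
  thus ?thesis
    using U V frob_inner_orth_right[OF orth_mat_transpose[OF R], of "L * U" m "L * V"]
      frob_inner_orth_left[OF L U V] by simp
qed

lemma frob_inner_diagonal:
  assumes U: "U \<in> carrier_mat m n" and D: "diagonal_mat U"
  shows "frob_inner U V = (\<Sum>i<min m n. U $$ (i, i) * V $$ (i, i))"
proof -
  have "frob_inner U V = (\<Sum>i<m. \<Sum>j<n. if j = i then U $$ (i, i) * V $$ (i, i) else 0)"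
    unfolding frob_inner_def using U D by (intro sum.cong refl) (auto simp: diagonal_mat_def)
  also have "\<dots> = (\<Sum>i\<in>{..<m} \<inter> {..<n}. U $$ (i, i) * V $$ (i, i))"
    by (simp add: sum.delta sum.inter_restrict)
  also have "{..<m} \<inter> {..<n} = {..<min m n}" by auto
  finally show ?thesis .
qed

lemma frob_inner_diff_expand:
  assumes X: "X \<in> carrier_mat m n" and A: "A \<in> carrier_mat m n" and B: "B \<in> carrier_mat m n"
  shows "frob_inner (X - A) (X - A)
    = frob_inner (X - B) (X - B) + 2 * (frob_inner (X - B) B - frob_inner (X - B) A)
      + frob_inner (B - A) (B - A)"
  unfolding frob_inner_def using X A B
  by (simp add: sum.distrib sum_subtractf sum_distrib_left algebra_simps)

lemma frob_inner_diff_pos: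
  assumes A: "A \<in> carrier_mat m n" and B: "B \<in> carrier_mat m n" and ne: "A \<noteq> B"
  shows "0 < frob_inner (B - A) (B - A)"
proof -
  obtain i j where ij: "i < m" "j < n" "A $$ (i, j) \<noteq> B $$ (i, j)"
    using ne A B by (metis carrier_matD eq_matI)
  have "0 < (B $$ (i, j) - A $$ (i, j)) * (B $$ (i, j) - A $$ (i, j))"
    using ij by (auto simp: zero_less_mult_iff linorder_neq_iff)
  also have "\<dots> \<le> (\<Sum>j'<n. (B $$ (i, j') - A $$ (i, j')) * (B $$ (i, j') - A $$ (i, j')))"
    using ij by (intro member_le_sum) auto
  also have "\<dots> \<le> frob_inner (B - A) (B - A)"
    unfolding frob_inner_def using ij A B by (auto intro!: member_le_sum sum_nonneg)
  finally show ?thesis .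
qed

section \<open>Nuclear norm\<close>

lemma proots_prod_linear: "proots (\<Prod>a\<leftarrow>xs. [:- a, 1:]) = mset xs"
proof -
  have "0 \<notin> (\<lambda>a. [:- a, 1:]) ` set xs" by auto
  thus ?thesis using proots_prod_list[of "map (\<lambda>a. [:- a, 1:]) xs"] by (simp add: comp_def)
qed

lemma proots_char_poly_orth_conj_diagonal:
  fixes D :: "real mat"
  assumes Q: "orth_mat n Q" and D: "D \<in> carrier_mat n n" "diagonal_mat D"
  shows "proots (char_poly (Q * D * transpose_mat Q)) = mset (diag_mat D)"
proof -
  note Q' = orth_matD[OF Q]
  have "similar_mat (Q * D * transpose_mat Q) D"
    using Q' D by (intro similar_matI[of _ _ Q "transpose_mat Q" n]) auto
  hence "char_poly (Q * D * transpose_mat Q) = char_poly D" by (rule char_poly_similar)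
  also have "\<dots> = (\<Prod>a\<leftarrow>diag_mat D. [:- a, 1:])"
    using D by (intro char_poly_upper_triangular[OF D(1)]) (auto simp: diagonal_mat_def)
  finally show ?thesis by (simp add: proots_prod_linear)
qed

lemma nuc_norm_eq_sum_sqrt_diag:
  assumes A: "A \<in> carrier_mat m n" and Q: "orth_mat n Q" and D: "D \<in> carrier_mat n n" "diagonal_mat D"
    and AA: "transpose_mat A * A = Q * D * transpose_mat Q"
  shows "nuc_norm A = (\<Sum>j<n. sqrt (D $$ (j, j)))"
proof -
  have "nuc_norm A = (\<Sum>a\<in>#mset (diag_mat D). sqrt a)"
    unfolding nuc_norm_def AA proots_char_poly_orth_conj_diagonal[OF Q D] ..
  also have "\<dots> = (\<Sum>j<n. sqrt (D $$ (j, j)))"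
    unfolding diag_mat_def using D
    by (simp add: sum_unfold_sum_mset lessThan_atLeast0 image_mset.compositionality comp_def)
  finally show ?thesis .
qed

lemma gram_mult_right:
  fixes A Q :: "real mat"
  assumes A: "A \<in> carrier_mat m n" and Q: "Q \<in> carrier_mat n k"
  shows "transpose_mat (A * Q) * (A * Q) = transpose_mat Q * (transpose_mat A * A) * Q"
proof -
  have At: "transpose_mat A \<in> carrier_mat n m" and Qt: "transpose_mat Q \<in> carrier_mat k n"
    using A Q by auto
  have "transpose_mat (A * Q) * (A * Q) = transpose_mat Q * (transpose_mat A * (A * Q))"
    using transpose_mult[OF A Q] assoc_mult_mat[OF Qt At, of "A * Q" k] A Q by simp
  also have "\<dots> = transpose_mat Q * (transpose_mat A * A) * Q"
    using assoc_mult_mat[OF At A Q] assoc_mult_mat[OF Qt _ Q, of "transpose_mat A * A"] A by simp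
  finally show ?thesis .
qed

lemma gram_orth_conj:
  fixes U :: "real mat"
  assumes L: "orth_mat m L" and R: "R \<in> carrier_mat n n" and U: "U \<in> carrier_mat m n"
  shows "transpose_mat (L * U * transpose_mat R) * (L * U * transpose_mat R)
    = R * (transpose_mat U * U) * transpose_mat R"
proof -
  note L' = orth_matD[OF L]
  have "transpose_mat (L * U) * (L * U) = transpose_mat U * U"
    using gram_mult_right[OF L'(1) U] L'(2) U by simp
  thus ?thesis using gram_mult_right[of "L * U" m n "transpose_mat R" n] L'(1) R U by simp
qed

lemma diagonal_gram:
  fixes U :: "real mat"
  assumes U: "U \<in> carrier_mat m n" and D: "diagonal_mat U"
  shows "diagonal_mat (transpose_mat U * U)"
    and "\<And>j. j < n \<Longrightarrow> (transpose_mat U * U) $$ (j, j) = (if j < m then (U $$ (j, j))\<^sup>2 else 0)"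
proof -
  have entry: "(transpose_mat U * U) $$ (i, j) = (if i < m then U $$ (i, i) * U $$ (i, j) else 0)"
    if "i < n" "j < n" for i j
  proof -
    have "(transpose_mat U * U) $$ (i, j) = (\<Sum>l\<in>{0..<m}. U $$ (l, i) * U $$ (l, j))"
      using that U by (simp add: scalar_prod_def)
    also have "\<dots> = (\<Sum>l\<in>{0..<m}. if l = i then U $$ (i, i) * U $$ (i, j) else 0)"
      using that U D by (intro sum.cong) (auto simp: diagonal_mat_def)
    finally show ?thesis by simp
  qed
  show "diagonal_mat (transpose_mat U * U)"
    using U D entry by (auto simp: diagonal_mat_def)
  show "\<And>j. j < n \<Longrightarrow> (transpose_mat U * U) $$ (j, j) = (if j < m then (U $$ (j, j))\<^sup>2 else 0)"
    using entry by (simp add: power2_eq_square)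
qed

lemma nuc_norm_orth_conj_diagonal:
  assumes L: "orth_mat m L" and R: "orth_mat n R" and T: "T \<in> carrier_mat m n" "diagonal_mat T"
  shows "nuc_norm (L * T * transpose_mat R) = (\<Sum>i<min m n. \<bar>T $$ (i, i)\<bar>)"
proof -
  note TT = diagonal_gram[OF T]
  have "nuc_norm (L * T * transpose_mat R) = (\<Sum>j<n. sqrt ((transpose_mat T * T) $$ (j, j)))"
    using orth_matD[OF L] orth_matD[OF R] T TT(1)
    by (intro nuc_norm_eq_sum_sqrt_diag[OF _ R _ _ gram_orth_conj[OF L _ T(1)], of m]) auto
  also have "\<dots> = (\<Sum>j<n. if j < m then \<bar>T $$ (j, j)\<bar> else 0)"
    using TT(2) by (intro sum.cong) auto
  also have "\<dots> = (\<Sum>j\<in>{..<n} \<inter> {..<m}. \<bar>T $$ (j, j)\<bar>)" by (simp add: sum.inter_restrict)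
  also have "{..<n} \<inter> {..<m} = {..<min m n}" by auto
  finally show ?thesis .
qed

lemma scalar_prod_le_sqrt_mult:
  fixes x y :: "real vec"
  assumes "x \<in> carrier_vec n" and "y \<in> carrier_vec n"
  shows "x \<bullet> y \<le> sqrt (x \<bullet> x) * sqrt (y \<bullet> y)"
proof -
  have "x \<bullet> y \<le> (\<Sum>i\<in>{0..<n}. \<bar>x $ i\<bar> * \<bar>y $ i\<bar>)"
    using assms by (auto simp: scalar_prod_def abs_mult[symmetric] intro!: sum_mono)
  also have "\<dots> \<le> L2_set (\<lambda>i. x $ i) {0..<n} * L2_set (\<lambda>i. y $ i) {0..<n}"
    by (rule L2_set_mult_ineq)
  also have "\<dots> = sqrt (x \<bullet> x) * sqrt (y \<bullet> y)"
    unfolding L2_set_def using assms by (simp add: scalar_prod_def power2_eq_square)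
  finally show ?thesis .
qed

lemma nuc_norm_eq_sum_col_norms:
  assumes A: "A \<in> carrier_mat m n"
  obtains Q where "orth_mat n Q" "nuc_norm A = (\<Sum>j<n. sqrt (col (A * Q) j \<bullet> col (A * Q) j))"
proof -
  have "transpose_mat (transpose_mat A * A) = transpose_mat A * A"
    using transpose_mult[of "transpose_mat A" n m A n] A by simp
  then obtain Q D where Q: "orth_mat n Q" and D: "D \<in> carrier_mat n n" "diagonal_mat D"
    and AA: "transpose_mat A * A = Q * D * transpose_mat Q"
    using real_symmetric_mat_spectral[of "transpose_mat A * A" n] A by auto
  note Q' = orth_matD[OF Q]
  have "transpose_mat (A * Q) * (A * Q) = transpose_mat Q * Q * D * (transpose_mat Q * Q)"
    unfolding gram_mult_right[OF A Q'(1)] AA using Q'(1) D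
    by (simp add: assoc_mult_mat[of _ n n _ n _ n])
  hence "col (A * Q) j \<bullet> col (A * Q) j = D $$ (j, j)" if "j < n" for j
    using that A Q'(1,2) D by (auto simp del: col_mult2)
  thus thesis using that[OF Q] nuc_norm_eq_sum_sqrt_diag[OF A Q D AA] by simp
qed

lemma frob_inner_le_nuc_norm:
  assumes W: "W \<in> carrier_mat m n" and A: "A \<in> carrier_mat m n" and c: "0 \<le> c"
    and op_bound: "\<And>v. v \<in> carrier_vec n \<Longrightarrow> (W *\<^sub>v v) \<bullet> (W *\<^sub>v v) \<le> c\<^sup>2 * (v \<bullet> v)"
  shows "frob_inner W A \<le> c * nuc_norm A"
proof -
  obtain Q where Q: "orth_mat n Q"
    and nuc: "nuc_norm A = (\<Sum>j<n. sqrt (col (A * Q) j \<bullet> col (A * Q) j))"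
    using nuc_norm_eq_sum_col_norms[OF A] by blast
  note Q' = orth_matD[OF Q]
  have "frob_inner W A = frob_inner (W * Q) (A * Q)" using frob_inner_orth_right[OF Q W A] ..
  also have "\<dots> = (\<Sum>j<n. col (W * Q) j \<bullet> col (A * Q) j)"
    using W A Q'(1) by (intro frob_inner_eq_sum_col) auto
  also have "\<dots> \<le> (\<Sum>j<n. c * sqrt (col (A * Q) j \<bullet> col (A * Q) j))"
  proof (rule sum_mono)
    fix j assume "j \<in> {..<n}"
    hence j: "j < n" by simp
    have "col Q j \<bullet> col Q j = 1" using arg_cong[OF Q'(2), of "\<lambda>M. M $$ (j, j)"] j Q'(1) by simp
    hence "col (W * Q) j \<bullet> col (W * Q) j \<le> c\<^sup>2"
      using op_bound[of "col Q j"] j W Q'(1) by (simp add: col_mult2 del: col_mult)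
    hence "sqrt (col (W * Q) j \<bullet> col (W * Q) j) \<le> c"
      using c real_sqrt_le_mono by fastforce
    hence "sqrt (col (W * Q) j \<bullet> col (W * Q) j) * sqrt (col (A * Q) j \<bullet> col (A * Q) j)
        \<le> c * sqrt (col (A * Q) j \<bullet> col (A * Q) j)"
      using conjugate_square_ge_0_vec[of "col (A * Q) j"] by (intro mult_right_mono) simp_all
    thus "col (W * Q) j \<bullet> col (A * Q) j \<le> c * sqrt (col (A * Q) j \<bullet> col (A * Q) j)"
      using scalar_prod_le_sqrt_mult[of "col (W * Q) j" m "col (A * Q) j"] W A Q'(1) j by simp
  qed
  also have "\<dots> = c * nuc_norm A" unfolding nuc by (simp add: sum_distrib_left)
  finally show ?thesis .
qed

lemma diagonal_mat_mult_vec_le: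
  fixes E :: "real mat"
  assumes E: "E \<in> carrier_mat m n" "diagonal_mat E"
    and c: "\<And>i. i < min m n \<Longrightarrow> \<bar>E $$ (i, i)\<bar> \<le> c" and v: "v \<in> carrier_vec n"
  shows "(E *\<^sub>v v) \<bullet> (E *\<^sub>v v) \<le> c\<^sup>2 * (v \<bullet> v)"
proof -
  have Ev: "(E *\<^sub>v v) $ i = (if i < n then E $$ (i, i) * v $ i else 0)" if "i < m" for i
  proof -
    have "(E *\<^sub>v v) $ i = (\<Sum>l\<in>{0..<n}. E $$ (i, l) * v $ l)"
      using that E v by (simp add: scalar_prod_def)
    also have "\<dots> = (\<Sum>l\<in>{0..<n}. if l = i then E $$ (i, i) * v $ i else 0)"
      using that E by (intro sum.cong) (auto simp: diagonal_mat_def)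
    finally show ?thesis by simp
  qed
  have "(E *\<^sub>v v) \<bullet> (E *\<^sub>v v) = (\<Sum>i<m. if i < n then (E $$ (i, i))\<^sup>2 * (v $ i)\<^sup>2 else 0)"
    unfolding scalar_prod_def using E(1)
    by (auto simp: lessThan_atLeast0 Ev power2_eq_square simp del: index_mult_mat_vec intro!: sum.cong)
  also have "\<dots> = (\<Sum>i\<in>{..<m} \<inter> {..<n}. (E $$ (i, i))\<^sup>2 * (v $ i)\<^sup>2)"
    by (simp add: sum.inter_restrict)
  also have "\<dots> \<le> (\<Sum>i\<in>{..<m} \<inter> {..<n}. c\<^sup>2 * (v $ i)\<^sup>2)"
  proof (rule sum_mono)
    fix i assume "i \<in> {..<m} \<inter> {..<n}"
    hence "(E $$ (i, i))\<^sup>2 \<le> c\<^sup>2" using c[of i] abs_le_square_iff by fastforce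
    thus "(E $$ (i, i))\<^sup>2 * (v $ i)\<^sup>2 \<le> c\<^sup>2 * (v $ i)\<^sup>2" by (simp add: mult_right_mono)
  qed
  also have "\<dots> \<le> (\<Sum>i<n. c\<^sup>2 * (v $ i)\<^sup>2)" by (intro sum_mono2) auto
  also have "\<dots> = c\<^sup>2 * (v \<bullet> v)"
    using v by (simp add: scalar_prod_def lessThan_atLeast0 sum_distrib_left power2_eq_square)
  finally show ?thesis .
qed

lemma orth_conj_diagonal_mult_vec_le:
  fixes E :: "real mat"
  assumes L: "orth_mat m L" and R: "orth_mat n R" and E: "E \<in> carrier_mat m n" "diagonal_mat E"
    and c: "\<And>i. i < min m n \<Longrightarrow> \<bar>E $$ (i, i)\<bar> \<le> c" and v: "v \<in> carrier_vec n"
  shows "((L * E * transpose_mat R) *\<^sub>v v) \<bullet> ((L * E * transpose_mat R) *\<^sub>v v) \<le> c\<^sup>2 * (v \<bullet> v)"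
proof -
  note L' = orth_matD[OF L] and R' = orth_matD[OF orth_mat_transpose[OF R]]
  have Rv: "transpose_mat R *\<^sub>v v \<in> carrier_vec n" using R'(1) v by simp
  have "(L * E * transpose_mat R) *\<^sub>v v = (L * E) *\<^sub>v (transpose_mat R *\<^sub>v v)"
    using L'(1) E(1) R'(1) v by (intro assoc_mult_mat_vec) auto
  also have "\<dots> = L *\<^sub>v (E *\<^sub>v (transpose_mat R *\<^sub>v v))"
    using L'(1) E(1) Rv by (intro assoc_mult_mat_vec) auto
  finally have LERv: "(L * E * transpose_mat R) *\<^sub>v v = L *\<^sub>v (E *\<^sub>v (transpose_mat R *\<^sub>v v))" .
  have "((L * E * transpose_mat R) *\<^sub>v v) \<bullet> ((L * E * transpose_mat R) *\<^sub>v v)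
      = (E *\<^sub>v (transpose_mat R *\<^sub>v v)) \<bullet> (E *\<^sub>v (transpose_mat R *\<^sub>v v))"
    unfolding LERv using orth_mat_scalar_prod[OF L] E(1) Rv by simp
  also have "\<dots> \<le> c\<^sup>2 * ((transpose_mat R *\<^sub>v v) \<bullet> (transpose_mat R *\<^sub>v v))"
    by (rule diagonal_mat_mult_vec_le[OF E c Rv])
  also have "\<dots> = c\<^sup>2 * (v \<bullet> v)" using orth_mat_scalar_prod[OF orth_mat_transpose[OF R] v v] by simp
  finally show ?thesis .
qed

section \<open>A sufficient condition for strict optimality\<close>

lemma strict_minimizer_by_dual_certificate:
  fixes X B A :: "real mat" and lam :: real
  assumes X: "X \<in> carrier_mat m n" and B: "B \<in> carrier_mat m n" and lam: "0 < lam"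
    and inner_B: "frob_inner (X - B) B = lam * (nuc_norm B)\<^sup>2"
    and inner_le: "\<And>A. A \<in> carrier_mat m n \<Longrightarrow> frob_inner (X - B) A \<le> lam * nuc_norm B * nuc_norm A"
    and A: "A \<in> carrier_mat m n" and ne: "A \<noteq> B"
  shows "(frob_norm (X - B))\<^sup>2 + lam * (nuc_norm B)\<^sup>2 < (frob_norm (X - A))\<^sup>2 + lam * (nuc_norm A)\<^sup>2"
proof -
  define s a where "s = nuc_norm B" and "a = nuc_norm A"
  have "(frob_norm (X - A))\<^sup>2
      = (frob_norm (X - B))\<^sup>2 + 2 * (lam * s\<^sup>2 - frob_inner (X - B) A) + frob_inner (B - A) (B - A)"
    unfolding frob_norm_square frob_inner_diff_expand[OF X A B] inner_B s_def ..
  moreover have "frob_inner (X - B) A \<le> lam * s * a" unfolding s_def a_def using inner_le[OF A] .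
  moreover have "0 < frob_inner (B - A) (B - A)" using frob_inner_diff_pos[OF A B ne] .
  moreover have "0 \<le> lam * (s - a)\<^sup>2" using lam by simp
  ultimately show ?thesis unfolding s_def[symmetric] a_def[symmetric]
    by (simp add: power2_eq_square algebra_simps)
qed

section \<open>The soft-thresholding solution\<close>

lemma sum_sv: "(\<Sum>i=1..d. sv S i) = (\<Sum>i<d. S $$ (i, i))"
  unfolding sv_def by (simp add: sum.atLeast1_atMost_eq)

lemma d_bar_greatest:
  fixes p :: real and S :: "real mat"
  assumes p: "0 < p" "p < 1" and k: "0 < min m n" and top: "0 < S $$ (0, 0)"
  defines "d \<equiv> d_bar p m n S"
  shows "1 \<le> d" and "d \<le> min m n"
    and "(1 - p) / (p + (1 - p) * d) * (\<Sum>i<d. S $$ (i, i)) < S $$ (d - 1, d - 1)"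
    and "d < min m n \<Longrightarrow>
      S $$ (d, d) \<le> (1 - p) / (p + (1 - p) * Suc d) * (\<Sum>i<Suc d. S $$ (i, i))"
proof -
  define P where "P d' \<longleftrightarrow> 1 \<le> d' \<and> d' \<le> min m n \<and>
      (1 - p) / (p + (1 - p) * real d') * (\<Sum>i=1..d'. sv S i) < sv S d'" for d'
  have dP: "d = Greatest P" unfolding d_def d_bar_def P_def ..
  \<comment> \<open>the predicate holds at 1 since sigma_1 > (1 - p) sigma_1, so the maximum exists\<close>
  have "P 1" unfolding P_def using k top p by (simp add: sv_def)
  moreover have bound: "\<forall>d'. P d' \<longrightarrow> d' \<le> min m n" unfolding P_def by simp
  ultimately have "P d" and greatest: "\<And>d'. P d' \<Longrightarrow> d' \<le> d"
    unfolding dP using GreatestI_nat[of P 1] Greatest_le_nat[of P _ "min m n"] by blast+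
  thus "1 \<le> d" "d \<le> min m n" "(1 - p) / (p + (1 - p) * d) * (\<Sum>i<d. S $$ (i, i)) < S $$ (d - 1, d - 1)"
    unfolding P_def sum_sv by (auto simp: sv_def)
  assume "d < min m n"
  hence "\<not> P (Suc d)" using greatest[of "Suc d"] by auto
  thus "S $$ (d, d) \<le> (1 - p) / (p + (1 - p) * Suc d) * (\<Sum>i<Suc d. S $$ (i, i))"
    unfolding P_def sum_sv using \<open>d < min m n\<close> by (auto simp: sv_def)
qed

lemma mu_thr_separates:
  fixes p :: real and S :: "real mat"
  assumes p: "0 < p" "p < 1" and k: "0 < min m n" and top: "0 < S $$ (0, 0)"
    and antitone: "\<And>i j. i \<le> j \<Longrightarrow> j < min m n \<Longrightarrow> S $$ (j, j) \<le> S $$ (i, i)"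
  shows "\<And>i. i < d_bar p m n S \<Longrightarrow> mu_thr p m n S < S $$ (i, i)"
    and "\<And>i. d_bar p m n S \<le> i \<Longrightarrow> i < min m n \<Longrightarrow> S $$ (i, i) \<le> mu_thr p m n S"
proof -
  define d where "d = d_bar p m n S"
  define \<Sigma> where "\<Sigma> = (\<Sum>i<d. S $$ (i, i))"
  note greatest = d_bar_greatest[OF p k top, folded d_def]
  have mu: "mu_thr p m n S = (1 - p) / (p + (1 - p) * d) * \<Sigma>"
    unfolding mu_thr_def d_def \<Sigma>_def Let_def sum_sv ..
  show "mu_thr p m n S < S $$ (i, i)" if "i < d_bar p m n S" for i
  proof -
    have "i \<le> d - 1" "d - 1 < min m n" using that greatest(2) unfolding d_def by auto
    hence "S $$ (d - 1, d - 1) \<le> S $$ (i, i)" by (rule antitone)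
    thus ?thesis using greatest(3) unfolding mu \<Sigma>_def by simp
  qed
  show "S $$ (i, i) \<le> mu_thr p m n S" if i: "d_bar p m n S \<le> i" "i < min m n" for i
  proof -
    have pos: "0 < p + (1 - p) * d" "0 < p + (1 - p) * Suc d" using p by (simp_all add: add_pos_nonneg)
    have "S $$ (d, d) * (p + (1 - p) * Suc d) \<le> (1 - p) * (\<Sigma> + S $$ (d, d))"
      using greatest(4) i pos(2) unfolding d_def[symmetric] \<Sigma>_def by (simp add: field_simps)
    hence "S $$ (d, d) * (p + (1 - p) * d) \<le> (1 - p) * \<Sigma>" by (simp add: algebra_simps)
    hence "S $$ (d, d) \<le> mu_thr p m n S" unfolding mu using pos(1) by (simp add: field_simps)
    thus ?thesis using antitone[of d i] i unfolding d_def by simp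
  qed
qed

lemma mu_thr_fixed_point:
  fixes p :: real and S :: "real mat"
  assumes p: "0 < p" "p < 1" and k: "0 < min m n" and top: "0 < S $$ (0, 0)"
    and antitone: "\<And>i j. i \<le> j \<Longrightarrow> j < min m n \<Longrightarrow> S $$ (j, j) \<le> S $$ (i, i)"
  shows "mu_thr p m n S = (1 - p) / p * (\<Sum>i<min m n. max (S $$ (i, i) - mu_thr p m n S) 0)"
proof -
  define d \<mu> where "d = d_bar p m n S" and "\<mu> = mu_thr p m n S"
  note sep = mu_thr_separates[OF p k top antitone, folded d_def \<mu>_def]
  have "d \<le> min m n" using d_bar_greatest(2)[OF p k top] unfolding d_def .
  hence "(\<Sum>i<min m n. max (S $$ (i, i) - \<mu>) 0)
      = (\<Sum>i<d. max (S $$ (i, i) - \<mu>) 0) + (\<Sum>i\<in>{d..<min m n}. max (S $$ (i, i) - \<mu>) 0)"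
    by (simp add: lessThan_atLeast0 sum.atLeastLessThan_concat)
  also have "\<dots> = (\<Sum>i<d. S $$ (i, i)) - d * \<mu>"
    using sep by (simp add: sum_subtractf less_imp_le)
  finally have soft: "(\<Sum>i<min m n. max (S $$ (i, i) - \<mu>) 0) = (\<Sum>i<d. S $$ (i, i)) - d * \<mu>" .
  have "0 < p + (1 - p) * d" using p by (intro add_pos_nonneg) auto
  hence "\<mu> * (p + (1 - p) * d) = (1 - p) * (\<Sum>i<d. S $$ (i, i))"
    unfolding \<mu>_def mu_thr_def Let_def d_def[symmetric] sum_sv by simp
  hence "p * \<mu> = (1 - p) * ((\<Sum>i<d. S $$ (i, i)) - d * \<mu>)" by (simp add: algebra_simps)
  thus ?thesis unfolding \<mu>_def[symmetric] soft using p by (simp add: field_simps)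
qed

lemma mu_thr_nonneg:
  fixes p :: real and S :: "real mat"
  assumes p: "0 < p" "p < 1" and "0 < min m n" and "0 < S $$ (0, 0)"
    and "\<And>i j. i \<le> j \<Longrightarrow> j < min m n \<Longrightarrow> S $$ (j, j) \<le> S $$ (i, i)"
  shows "0 \<le> mu_thr p m n S"
proof -
  have "0 \<le> (1 - p) / p * (\<Sum>i<min m n. max (S $$ (i, i) - mu_thr p m n S) 0)"
    using p by (intro mult_nonneg_nonneg sum_nonneg) auto
  thus ?thesis using mu_thr_fixed_point[OF assms] by simp
qed

lemma is_svd_top_singular_value_pos:
  assumes svd: "is_svd m n X L S R" and X0: "X \<noteq> 0\<^sub>m m n"
  shows "0 < min m n" and "0 < S $$ (0, 0)"
proof -
  from svd have S: "S \<in> carrier_mat m n" "diagonal_mat S" and L: "L \<in> carrier_mat m m"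
    and R: "R \<in> carrier_mat n n" and X: "X = L * S * transpose_mat R"
    and nonneg: "\<forall>i<min m n. 0 \<le> S $$ (i, i)"
    and antitone: "\<forall>i j. i \<le> j \<longrightarrow> j < min m n \<longrightarrow> S $$ (j, j) \<le> S $$ (i, i)"
    unfolding is_svd_def orth_mat_def by auto
  have "\<exists>i<min m n. S $$ (i, i) \<noteq> 0"
  proof (rule ccontr)
    assume "\<not> (\<exists>i<min m n. S $$ (i, i) \<noteq> 0)"
    hence "S = 0\<^sub>m m n" using S by (intro eq_matI) (auto simp: diagonal_mat_def)
    hence "X = 0\<^sub>m m n"
      unfolding X using L R by (simp add: right_mult_zero_mat[OF L] left_mult_zero_mat[of "transpose_mat R" n n m])
    thus False using X0 by contradiction
  qed
  then obtain i where i: "i < min m n" and Si: "S $$ (i, i) \<noteq> 0" by blast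
  thus "0 < min m n" by simp
  have "0 < S $$ (i, i)" using nonneg i Si by (simp add: less_le)
  thus "0 < S $$ (0, 0)" using antitone i by force
qed

lemma soft_thr_diag_residual:
  fixes S :: "real mat"
  assumes S: "S \<in> carrier_mat m n" "diagonal_mat S"
    and nonneg: "\<And>i. i < min m n \<Longrightarrow> 0 \<le> S $$ (i, i)" and \<mu>: "0 \<le> \<mu>"
  defines "T \<equiv> soft_thr_diag \<mu> S"
  shows "T \<in> carrier_mat m n" and "diagonal_mat T" and "diagonal_mat (S - T)"
    and T_ii: "\<And>i. i < min m n \<Longrightarrow> T $$ (i, i) = max (S $$ (i, i) - \<mu>) 0"
    and "\<And>i. i < min m n \<Longrightarrow> \<bar>(S - T) $$ (i, i)\<bar> \<le> \<mu>"
    and "frob_inner (S - T) T = \<mu> * (\<Sum>i<min m n. T $$ (i, i))"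
proof -
  show T_ii: "T $$ (i, i) = max (S $$ (i, i) - \<mu>) 0" if "i < min m n" for i
    using that S unfolding T_def soft_thr_diag_def by simp
  show T: "T \<in> carrier_mat m n" and "diagonal_mat T"
    using S unfolding T_def soft_thr_diag_def by (auto simp: diagonal_mat_def)
  thus "diagonal_mat (S - T)" using S by (auto simp: diagonal_mat_def)
  show "\<bar>(S - T) $$ (i, i)\<bar> \<le> \<mu>" if "i < min m n" for i
    using T_ii[OF that] nonneg[OF that] \<mu> that S T by auto
  have "frob_inner (S - T) T = (\<Sum>i<min m n. (S - T) $$ (i, i) * T $$ (i, i))"
    using S T \<open>diagonal_mat (S - T)\<close> by (intro frob_inner_diagonal) auto
  also have "\<dots> = (\<Sum>i<min m n. \<mu> * T $$ (i, i))"
    using S T T_ii by (intro sum.cong) (auto simp: max_def)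
  finally show "frob_inner (S - T) T = \<mu> * (\<Sum>i<min m n. T $$ (i, i))"
    by (simp add: sum_distrib_left)
qed

lemma soft_thr_dual_certificate:
  fixes S :: "real mat"
  assumes L: "orth_mat m L" and R: "orth_mat n R" and S: "S \<in> carrier_mat m n" "diagonal_mat S"
    and nonneg: "\<And>i. i < min m n \<Longrightarrow> 0 \<le> S $$ (i, i)" and \<mu>: "0 \<le> \<mu>"
  defines "B \<equiv> L * soft_thr_diag \<mu> S * transpose_mat R"
  shows "B \<in> carrier_mat m n"
    and "nuc_norm B = (\<Sum>i<min m n. max (S $$ (i, i) - \<mu>) 0)"
    and "frob_inner (L * S * transpose_mat R - B) B = \<mu> * nuc_norm B"
    and "\<And>A. A \<in> carrier_mat m n \<Longrightarrow> frob_inner (L * S * transpose_mat R - B) A \<le> \<mu> * nuc_norm A"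
proof -
  define T where "T = soft_thr_diag \<mu> S"
  note res = soft_thr_diag_residual[OF S nonneg \<mu>, folded T_def]
  note L' = orth_matD[OF L] and R' = orth_matD[OF R]
  show B: "B \<in> carrier_mat m n" unfolding B_def T_def[symmetric] using L' R' res(1) by simp
  have "nuc_norm B = (\<Sum>i<min m n. \<bar>T $$ (i, i)\<bar>)"
    unfolding B_def T_def[symmetric] by (rule nuc_norm_orth_conj_diagonal[OF L R res(1,2)])
  also have "\<dots> = (\<Sum>i<min m n. T $$ (i, i))" using res(4) by (intro sum.cong) force+
  finally have nuc_B: "nuc_norm B = (\<Sum>i<min m n. T $$ (i, i))" .
  thus "nuc_norm B = (\<Sum>i<min m n. max (S $$ (i, i) - \<mu>) 0)" using res(4) by simp
  have XB: "L * S * transpose_mat R - B = L * (S - T) * transpose_mat R"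
    unfolding B_def T_def[symmetric] using L' R' S res(1)
    by (simp add: mult_minus_distrib_mat[of L m m S n T] minus_mult_distrib_mat[of _ m n _ _ n])
  have "frob_inner (L * S * transpose_mat R - B) B = frob_inner (S - T) T"
    unfolding XB unfolding B_def T_def[symmetric] using S res(1)
    by (intro frob_inner_orth_conj[OF L R]) auto
  thus "frob_inner (L * S * transpose_mat R - B) B = \<mu> * nuc_norm B" using res(6) nuc_B by simp
  show "frob_inner (L * S * transpose_mat R - B) A \<le> \<mu> * nuc_norm A" if A: "A \<in> carrier_mat m n" for A
    unfolding XB using L' R' S res(1) A
    by (intro frob_inner_le_nuc_norm[OF _ A \<mu>] orth_conj_diagonal_mult_vec_le[OF L R _ res(3,5)]) auto
qed

theorem theorem4:
  fixes m n :: nat and p :: real and X L S R :: "real mat"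
  assumes "0 < p" and "p < 1"
    and "is_svd m n X L S R"
    and "X \<noteq> 0\<^sub>m m n"
  shows "L * soft_thr_diag (mu_thr p m n S) S * transpose_mat R \<in> carrier_mat m n \<and>
         (\<forall>A \<in> carrier_mat m n. A \<noteq> L * soft_thr_diag (mu_thr p m n S) S * transpose_mat R \<longrightarrow>
            (frob_norm (X - L * soft_thr_diag (mu_thr p m n S) S * transpose_mat R))\<^sup>2
              + (1 - p) / p * (nuc_norm (L * soft_thr_diag (mu_thr p m n S) S * transpose_mat R))\<^sup>2
            < (frob_norm (X - A))\<^sup>2 + (1 - p) / p * (nuc_norm A)\<^sup>2)"
proof -
  from assms(3) have X: "X \<in> carrier_mat m n" and L: "orth_mat m L" and R: "orth_mat n R"
    and S: "S \<in> carrier_mat m n" "diagonal_mat S" and X_svd: "X = L * S * transpose_mat R"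
    and nonneg: "\<And>i. i < min m n \<Longrightarrow> 0 \<le> S $$ (i, i)"
    and antitone: "\<And>i j. i \<le> j \<Longrightarrow> j < min m n \<Longrightarrow> S $$ (j, j) \<le> S $$ (i, i)"
    unfolding is_svd_def by auto
  note top = is_svd_top_singular_value_pos[OF assms(3,4)]
  define \<mu> lam B where "\<mu> = mu_thr p m n S" and "lam = (1 - p) / p"
    and "B = L * soft_thr_diag \<mu> S * transpose_mat R"
  have lam: "0 < lam" unfolding lam_def using assms(1,2) by simp
  have \<mu>0: "0 \<le> \<mu>" unfolding \<mu>_def by (rule mu_thr_nonneg[OF assms(1,2) top antitone])
  note cert = soft_thr_dual_certificate[OF L R S nonneg \<mu>0, folded B_def X_svd]
  have \<mu>_B: "\<mu> = lam * nuc_norm B"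
    using mu_thr_fixed_point[OF assms(1,2) top antitone] cert(2) unfolding \<mu>_def lam_def by simp
  have "frob_inner (X - B) B = lam * (nuc_norm B)\<^sup>2"
    using cert(3) unfolding \<mu>_B by (simp add: power2_eq_square)
  moreover have "frob_inner (X - B) A \<le> lam * nuc_norm B * nuc_norm A" if "A \<in> carrier_mat m n" for A
    using cert(4)[of A] that unfolding \<mu>_B by simp
  ultimately show ?thesis
    using cert(1) strict_minimizer_by_dual_certificate[OF X cert(1) lam] unfolding B_def \<mu>_def lam_def
    by blast
qed

end
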